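(* Let $F_a(x,u,\partial u,\ldots,\partial^Nu)=0$, $a=1,\ldots,M$, be a system of differential equations for $u=(u^1,\ldots,u^m)$ with solution space $\mathcal{E}$, admitting an adjoint-symmetry $Q^a(x,u,\partial u,\ldots,\partial^su)$, i.e. $(\delta^*_QF)_\alpha|_{\mathcal{E}}=0$, and let $P^\alpha(x,u,\partial u,\ldots,\partial^ru)$ be the characteristic of a local symmetry, i.e. $(\delta_PF)_a|_{\mathcal{E}}=0$. Let $L=v^aF_a$ with auxiliary variables $v^a$, and let $\Phi^i(P;L)$ be the Noether conserved current of the extended Euler–Lagrange system $F_a=0$, $(\delta^*_vF)_\alpha=0$ associated with the extension of the symmetry, defined through $\delta_P L = P^\alpha E_{u^\alpha}(L)+D_i\Phi^i(P;L)$ (Fréchet derivative in $u$ only, explicitly $\Phi^i(P;L)=\Psi^i(P,v;F)$). Then $\Phi^i(P;L)|_{v=Q}$ is equivalent to (indeed equal to) the conserved current $\Psi^i(P,Q;F)$ given by the adjoint-symmetry/symmetry formula $$Q^a(\delta_PF)_a-P^\alpha(\delta^*_QF)_\alpha=D_i\Psi^i(P,Q;F),$$ and $D_i\Psi^i(P,Q;F)|_{\mathcal{E}}=0$.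
   Context: Independent variables $x=(x^1,\ldots,x^n)$, dependent variables $u=(u^1,\ldots,u^m)$; summation over repeated indices. Jet coordinates $u^\alpha_I$ for multi-indices $I$; $D_i$ is the total derivative, $D_I=D_{i_1}\cdots D_{i_k}$, $|I|=k$. "On $\mathcal{E}$" means evaluated using the system and its differential consequences. Fréchet derivative $(\delta_wF)_a=\sum_I(D_Iw^\alpha)\partial F_a/\partial u^\alpha_I$; adjoint $(\delta^*_vF)_\alpha=\sum_I(-1)^{|I|}D_I(v^a\partial F_a/\partial u^\alpha_I)$; Euler operator $E_{u^\alpha}(f)=\sum_I(-1)^{|I|}D_I(\partial f/\partial u^\alpha_I)$. The vector $$\Psi^i(w,v;F)=\sum_{k\ge1}\sum_{|J|+|K|=k-1}(-1)^{|K|}(D_Jw^\alpha)\,D_K\Big(v^a\frac{\partial F_a}{\partial u^\alpha_{JKi}}\Big).$$ A symmetry generator $\xi^i\partial_{x^i}+\eta^\alpha\partial_{u^\alpha}$ has characteristic $P^\alpha=\eta^\alpha-\xi^iu^\alpha_i$. In the paper's terminology a system admitting an adjoint-symmetry is called "nonlinearly self-adjoint" in the general sense. *)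

theory Defs
  imports "HOL-Analysis.Analysis" "HOL-Library.Multiset"
begin

text \<open>Coordinates: independent variables x^i, jet coordinates u^alpha_I of the
dependent variables (symmetric multi-index I represented as a multiset of directions), and
jet coordinates v^a_I of the auxiliary variables v^a.\<close>

datatype jc = X nat | U nat "nat multiset" | V nat "nat multiset"

type_synonym jet = "jc \<Rightarrow> real"
type_synonym dfun = "jet \<Rightarrow> real"

definition deps :: "dfun \<Rightarrow> jc set" where
  "deps f = {c. \<exists>p t. f (p(c := t)) \<noteq> f p}"

definition pd :: "dfun \<Rightarrow> jc \<Rightarrow> dfun" where
  "pd f c p = deriv (\<lambda>t. f (p(c := t))) (p c)"

definition smooth_dfun :: "dfun \<Rightarrow> bool" where
  "smooth_dfun f \<longleftrightarrow> finite (deps f) \<and>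
     (\<forall>cs. continuous_on UNIV (foldr (\<lambda>c g. pd g c) cs f) \<and>
        (\<forall>c p. (\<lambda>t. foldr (\<lambda>c g. pd g c) cs f (p(c := t))) differentiable (at (p c))))"

fun ucoord :: "nat \<Rightarrow> nat \<Rightarrow> jc \<Rightarrow> bool" where
  "ucoord n m (X i) \<longleftrightarrow> i < n"
| "ucoord n m (U \<alpha> I) \<longleftrightarrow> \<alpha> < m \<and> set_mset I \<subseteq> {..<n}"
| "ucoord n m (V a I) \<longleftrightarrow> False"

fun jorder :: "jc \<Rightarrow> nat" where
  "jorder (X i) = 0"
| "jorder (U \<alpha> I) = size I"
| "jorder (V a I) = size I"

definition Dt :: "nat \<Rightarrow> dfun \<Rightarrow> dfun" where
  "Dt i f p = pd f (X i) p +
     (\<Sum>c\<in>deps f. (case c of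
         U \<alpha> I \<Rightarrow> p (U \<alpha> (add_mset i I)) * pd f c p
       | V a I \<Rightarrow> p (V a (add_mset i I)) * pd f c p
       | X j \<Rightarrow> 0))"

definition Dl :: "nat list \<Rightarrow> dfun \<Rightarrow> dfun" where
  "Dl I f = foldr Dt I f"

definition mis :: "nat \<Rightarrow> nat \<Rightarrow> nat list set" where
  "mis n k = {I. set I \<subseteq> {..<n} \<and> length I = k}"

text \<open>dF/du^alpha_I for an ordered multi-index I: the coordinate partial derivative divided by
the number of distinct orderings of I (symmetric convention, so that sums over ordered
multi-indices reproduce the usual formulas).\<close>
definition dU :: "dfun \<Rightarrow> nat \<Rightarrow> nat list \<Rightarrow> dfun" where
  "dU f \<alpha> I p = pd f (U \<alpha> (mset I)) p / real (card {J. mset J = mset I})"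

text \<open>Frechet derivative (delta_w F)_a; N bounds the differential order of F.\<close>
definition frechet :: "nat \<Rightarrow> nat \<Rightarrow> nat \<Rightarrow> (nat \<Rightarrow> dfun) \<Rightarrow> (nat \<Rightarrow> dfun) \<Rightarrow> nat \<Rightarrow> dfun" where
  "frechet n m N w F a p =
     (\<Sum>k\<le>N. \<Sum>I\<in>mis n k. \<Sum>\<alpha><m. Dl I (w \<alpha>) p * dU (F a) \<alpha> I p)"

definition adjoint :: "nat \<Rightarrow> nat \<Rightarrow> nat \<Rightarrow> (nat \<Rightarrow> dfun) \<Rightarrow> (nat \<Rightarrow> dfun) \<Rightarrow> nat \<Rightarrow> dfun" where
  "adjoint n M N v F \<alpha> p =
     (\<Sum>k\<le>N. \<Sum>I\<in>mis n k. (-1) ^ k * Dl I (\<lambda>q. \<Sum>a<M. v a q * dU (F a) \<alpha> I q) p)"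

definition Psi :: "nat \<Rightarrow> nat \<Rightarrow> nat \<Rightarrow> nat \<Rightarrow> (nat \<Rightarrow> dfun) \<Rightarrow> (nat \<Rightarrow> dfun) \<Rightarrow> (nat \<Rightarrow> dfun)
                   \<Rightarrow> nat \<Rightarrow> dfun" where
  "Psi n m M N w v F i p =
     (\<Sum>k\<in>{1..N}. \<Sum>JK\<in>{(J, K). set J \<subseteq> {..<n} \<and> set K \<subseteq> {..<n} \<and> length J + length K = k - 1}.
        \<Sum>\<alpha><m. (-1) ^ length (snd JK) * Dl (fst JK) (w \<alpha>) p *
            Dl (snd JK) (\<lambda>q. \<Sum>a<M. v a q * dU (F a) \<alpha> (fst JK @ snd JK @ [i]) q) p)"

definition vvar :: "nat \<Rightarrow> dfun" where
  "vvar a p = p (V a {#})"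

text \<open>Noether current Phi^i(P;L) of L = v^a F_a (explicitly Psi^i(P,v;F)).\<close>
definition Phi :: "nat \<Rightarrow> nat \<Rightarrow> nat \<Rightarrow> nat \<Rightarrow> (nat \<Rightarrow> dfun) \<Rightarrow> (nat \<Rightarrow> dfun) \<Rightarrow> nat \<Rightarrow> dfun" where
  "Phi n m M N P F i = Psi n m M N P vvar F i"

definition subst_v :: "(nat \<Rightarrow> dfun) \<Rightarrow> dfun \<Rightarrow> dfun" where
  "subst_v Q f p = f (\<lambda>c. case c of
       V a I \<Rightarrow> Dl (sorted_list_of_multiset I) (Q a) p
     | _ \<Rightarrow> p c)"

definition onE :: "nat \<Rightarrow> nat \<Rightarrow> (nat \<Rightarrow> dfun) \<Rightarrow> dfun \<Rightarrow> bool" where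
  "onE n M F g \<longleftrightarrow>
     (\<forall>p. (\<forall>a<M. \<forall>I. set I \<subseteq> {..<n} \<longrightarrow> Dl I (F a) p = 0) \<longrightarrow> g p = 0)"

end

theory Submission
  imports Defs
begin

text \<open>Write B^alpha_I = Q^a dF_a/du^alpha_I, which is symmetric in the multi-index I.
  For |I| = k, the Leibniz rule splits D_i((-1)^|K| D_J P^alpha * D_K B^alpha_(JKi)) into a
  term moving i onto J and a term moving i onto K; summed over all splittings with
  |J| + |K| = k - 1 these telescope to D_I P^alpha * B^alpha_I - (-1)^k P^alpha * D_I B^alpha_I.
  Summing over k and alpha gives Q^a (delta_P F)_a - P^alpha (delta*_Q F)_alpha = D_i Psi^i,
  whose left side vanishes on the solution space. The telescoping needs D_I to depend only
  on the multiset I, i.e. commuting total derivatives, which comes down to Schwarz's theorem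
  in the jet coordinates.

  In Phi^i(P;L) = Psi^i(P,v;F) the auxiliary variables only occur in expressions D_K(v^a g)
  with v-free g; on these, substituting v := Q commutes with total derivatives, which gives
  Phi^i at v = Q equal to Psi^i(P,Q;F).\<close>

section \<open>Smooth differential functions\<close>

lemma notin_deps_upd: "c \<notin> deps f \<Longrightarrow> f (p(c := t)) = f p"
  unfolding deps_def by blast

lemma pd_notin_deps: "c \<notin> deps f \<Longrightarrow> pd f c p = 0"
  unfolding pd_def by (simp add: notin_deps_upd)

lemma deps_pd_subset: "deps (pd f c) \<subseteq> deps f"
proof
  fix d assume d: "d \<in> deps (pd f c)"
  show "d \<in> deps f"
  proof (rule ccontr)
    assume nd: "d \<notin> deps f"
    have "pd f c (p(d := s)) = pd f c p" for p s
    proof (cases "d = c")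
      case True
      then show ?thesis using pd_notin_deps[OF nd] by simp
    next
      case False
      then have "(\<lambda>t. f (p(d := s, c := t))) = (\<lambda>t. f (p(c := t)))"
        using notin_deps_upd[OF nd, of "p(c := _)" s] by (simp add: fun_upd_twist)
      then show ?thesis using False unfolding pd_def by simp
    qed
    then show False using d unfolding deps_def by auto
  qed
qed

lemma deps_binop_subset: "deps (\<lambda>p. h (f p) (g p)) \<subseteq> deps f \<union> deps g"
  unfolding deps_def by auto metis

lemma deps_const [simp]: "deps (\<lambda>p. k) = {}"
  unfolding deps_def by auto

lemma deps_coord: "deps (\<lambda>p. p e) \<subseteq> {e}"
  unfolding deps_def by auto

lemma deps_sum_subset: "finite A \<Longrightarrow> deps (\<lambda>p. \<Sum>x\<in>A. h x p) \<subseteq> (\<Union>x\<in>A. deps (h x))"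
proof (induction A rule: finite_induct)
  case (insert a A)
  then show ?case
    using deps_binop_subset[of "(+)" "h a" "\<lambda>p. \<Sum>x\<in>A. h x p"] by auto
qed simp

definition iter_pd :: "jc list \<Rightarrow> dfun \<Rightarrow> dfun" where
  "iter_pd cs f = foldr (\<lambda>c g. pd g c) cs f"

lemma iter_pd_simps [simp]: "iter_pd [] f = f" "iter_pd (c # cs) f = pd (iter_pd cs f) c"
  by (simp_all add: iter_pd_def)

lemma iter_pd_append: "iter_pd (cs @ ds) f = iter_pd cs (iter_pd ds f)"
  by (simp add: iter_pd_def)

definition coordwise_differentiable :: "dfun \<Rightarrow> bool" where
  "coordwise_differentiable f \<longleftrightarrow> (\<forall>c p. (\<lambda>t. f (p(c := t))) differentiable (at (p c)))"

lemma smooth_dfun_iff: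
  "smooth_dfun f \<longleftrightarrow> finite (deps f) \<and>
     (\<forall>cs. continuous_on UNIV (iter_pd cs f) \<and> coordwise_differentiable (iter_pd cs f))"
  unfolding smooth_dfun_def iter_pd_def coordwise_differentiable_def by blast

lemma smooth_dfun_finite_deps: "smooth_dfun f \<Longrightarrow> finite (deps f)"
  unfolding smooth_dfun_iff by blast

lemma smooth_dfun_continuous: "smooth_dfun f \<Longrightarrow> continuous_on UNIV f"
  unfolding smooth_dfun_iff by (metis iter_pd_simps(1))

lemma smooth_dfun_coordwise_differentiable: "smooth_dfun f \<Longrightarrow> coordwise_differentiable f"
  unfolding smooth_dfun_iff by (metis iter_pd_simps(1))

lemma smooth_dfun_coinduct:
  assumes "C f"
    and C_basic: "\<And>g. C g \<Longrightarrow> finite (deps g) \<and> continuous_on UNIV g \<and> coordwise_differentiable g"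
    and C_pd: "\<And>g c. C g \<Longrightarrow> C (pd g c)"
  shows "smooth_dfun f"
proof -
  have "C (iter_pd cs f)" for cs
    by (induction cs) (simp_all add: \<open>C f\<close> C_pd)
  then show ?thesis
    unfolding smooth_dfun_iff using C_basic \<open>C f\<close> by blast
qed

lemma smooth_dfun_pd: "smooth_dfun f \<Longrightarrow> smooth_dfun (pd f c)"
  unfolding smooth_dfun_iff
  using deps_pd_subset[of f c] finite_subset by (metis iter_pd_append iter_pd_simps)

lemma has_real_derivative_pd:
  assumes "coordwise_differentiable f"
  shows "((\<lambda>x. f (p(c := x))) has_real_derivative pd f c (p(c := t))) (at t)"
proof -
  have "(\<lambda>x. f ((p(c := t))(c := x))) differentiable (at ((p(c := t)) c))"
    using assms unfolding coordwise_differentiable_def by blast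
  then show ?thesis
    unfolding pd_def by (simp add: DERIV_deriv_iff_real_differentiable)
qed

lemma pd_eqI:
  assumes "\<And>t. ((\<lambda>x. f (p(c := x))) has_real_derivative D t) (at t)"
  shows "pd f c p = D (p c)"
  unfolding pd_def using DERIV_imp_deriv[OF assms] .

lemma coordwise_differentiableI:
  assumes "\<And>p c t. ((\<lambda>x. f (p(c := x))) has_real_derivative D p c t) (at t)"
  shows "coordwise_differentiable f"
  unfolding coordwise_differentiable_def using assms real_differentiable_def by blast

lemma pd_const [simp]: "pd (\<lambda>p. k) c = (\<lambda>p. 0)"
  unfolding pd_def by simp

lemma pd_coord: "pd (\<lambda>p. p e) c = (\<lambda>p. if c = e then 1 else 0)"
  using pd_notin_deps[of c "\<lambda>p. p e"] deps_coord[of e] by (auto simp: pd_def)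

lemma smooth_dfun_const: "smooth_dfun (\<lambda>p. k)"
  by (rule smooth_dfun_coinduct[where C = "\<lambda>g. \<exists>k. g = (\<lambda>p. k)"])
    (auto simp: coordwise_differentiable_def)

lemma smooth_dfun_coord: "smooth_dfun (\<lambda>p. p e)"
proof (rule smooth_dfun_coinduct[where C = "\<lambda>g. g = (\<lambda>p. p e) \<or> (\<exists>k. g = (\<lambda>p. k))"])
  have "coordwise_differentiable (\<lambda>p. p e)"
    by (rule coordwise_differentiableI[where D = "\<lambda>p c t. if c = e then 1 else 0"]) auto
  then show "finite (deps g) \<and> continuous_on UNIV g \<and> coordwise_differentiable g"
    if "g = (\<lambda>p. p e) \<or> (\<exists>k. g = (\<lambda>p. k))" for g
    using that finite_subset[OF deps_coord] by (auto simp: coordwise_differentiable_def)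
qed (auto simp: pd_coord)

text \<open>Iterated partial derivatives of a product are sums of products, so products are
  handled through finite lists of factor pairs.\<close>

definition sum_prod :: "(dfun \<times> dfun) list \<Rightarrow> dfun" where
  "sum_prod L p = (\<Sum>(f, g)\<leftarrow>L. f p * g p)"

definition pd_pairs :: "jc \<Rightarrow> (dfun \<times> dfun) list \<Rightarrow> (dfun \<times> dfun) list" where
  "pd_pairs c L = concat (map (\<lambda>(f, g). [(pd f c, g), (f, pd g c)]) L)"

lemma sum_prod_simps [simp]:
  "sum_prod [] = (\<lambda>p. 0)" "sum_prod ((f, g) # L) = (\<lambda>p. f p * g p + sum_prod L p)"
  by (auto simp: sum_prod_def)

lemma pd_pairs_simps [simp]:
  "pd_pairs c [] = []" "pd_pairs c ((f, g) # L) = (pd f c, g) # (f, pd g c) # pd_pairs c L"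
  by (simp_all add: pd_pairs_def)

lemma has_real_derivative_sum_prod:
  assumes "\<forall>(f, g)\<in>set L. coordwise_differentiable f \<and> coordwise_differentiable g"
  shows "((\<lambda>x. sum_prod L (p(c := x))) has_real_derivative sum_prod (pd_pairs c L) (p(c := t))) (at t)"
  using assms
proof (induction L)
  case (Cons fg L)
  obtain f g where fg: "fg = (f, g)" by fastforce
  have f: "coordwise_differentiable f" and g: "coordwise_differentiable g"
    using Cons.prems by (auto simp: fg)
  have IH: "((\<lambda>x. sum_prod L (p(c := x))) has_real_derivative sum_prod (pd_pairs c L) (p(c := t))) (at t)"
    by (rule Cons.IH) (use Cons.prems in simp)
  from DERIV_add[OF DERIV_mult[OF has_real_derivative_pd[OF f, of p c t] has_real_derivative_pd[OF g, of p c t]] IH]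
  show ?case by (simp only: fg sum_prod_simps pd_pairs_simps add.assoc mult.commute)
qed simp

lemma finite_deps_continuous_sum_prod:
  assumes "\<forall>(f, g)\<in>set L. smooth_dfun f \<and> smooth_dfun g"
  shows "finite (deps (sum_prod L)) \<and> continuous_on UNIV (sum_prod L)"
  using assms
proof (induction L)
  case (Cons fg L)
  obtain f g where fg: "fg = (f, g)" by fastforce
  have f: "smooth_dfun f" and g: "smooth_dfun g" and IH: "finite (deps (sum_prod L))"
    "continuous_on UNIV (sum_prod L)" using Cons by (auto simp: fg)
  have "deps (sum_prod (fg # L)) \<subseteq> (deps f \<union> deps g) \<union> deps (sum_prod L)"
    using deps_binop_subset[of "(+)" "\<lambda>p. f p * g p" "sum_prod L"]
      deps_binop_subset[of "(*)" f g] by (auto simp: fg)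
  moreover have "continuous_on UNIV (sum_prod (fg # L))"
    using f g IH(2) by (auto simp: fg smooth_dfun_continuous intro!: continuous_intros)
  ultimately show ?case
    using f g IH(1) by (auto simp: smooth_dfun_finite_deps intro: finite_subset)
qed simp

lemma smooth_dfun_sum_prod:
  assumes "\<forall>(f, g)\<in>set L. smooth_dfun f \<and> smooth_dfun g"
  shows "smooth_dfun (sum_prod L)"
proof (rule smooth_dfun_coinduct[where C = "\<lambda>h. \<exists>L. h = sum_prod L \<and> (\<forall>(f, g)\<in>set L. smooth_dfun f \<and> smooth_dfun g)"])
  fix h assume "\<exists>L. h = sum_prod L \<and> (\<forall>(f, g)\<in>set L. smooth_dfun f \<and> smooth_dfun g)"
  then obtain L where h: "h = sum_prod L" and L: "\<forall>(f, g)\<in>set L. smooth_dfun f \<and> smooth_dfun g"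
    by blast
  have diff: "\<forall>(f, g)\<in>set L. coordwise_differentiable f \<and> coordwise_differentiable g"
    using L smooth_dfun_coordwise_differentiable by auto
  have pd_eq: "pd (sum_prod L) c = sum_prod (pd_pairs c L)" for c
    using pd_eqI[OF has_real_derivative_sum_prod[OF diff]] by fastforce
  have "finite (deps (sum_prod L)) \<and> continuous_on UNIV (sum_prod L)"
    using L by (rule finite_deps_continuous_sum_prod)
  moreover have "coordwise_differentiable (sum_prod L)"
    by (rule coordwise_differentiableI[OF has_real_derivative_sum_prod[OF diff]])
  ultimately show "finite (deps h) \<and> continuous_on UNIV h \<and> coordwise_differentiable h"
    by (simp add: h)
  have "\<forall>(f, g)\<in>set (pd_pairs c L). smooth_dfun f \<and> smooth_dfun g" for c
    using L by (induction L) (auto simp: smooth_dfun_pd)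
  then show "\<exists>L. pd h c = sum_prod L \<and> (\<forall>(f, g)\<in>set L. smooth_dfun f \<and> smooth_dfun g)" for c
    unfolding h pd_eq by blast
qed (use assms in blast)

lemma smooth_dfun_mult: "smooth_dfun f \<Longrightarrow> smooth_dfun g \<Longrightarrow> smooth_dfun (\<lambda>p. f p * g p)"
  using smooth_dfun_sum_prod[of "[(f, g)]"] by simp

lemma smooth_dfun_add: "smooth_dfun f \<Longrightarrow> smooth_dfun g \<Longrightarrow> smooth_dfun (\<lambda>p. f p + g p)"
  using smooth_dfun_sum_prod[of "[(f, \<lambda>p. 1), (g, \<lambda>p. 1)]"] smooth_dfun_const by simp

lemma smooth_dfun_cmult: "smooth_dfun f \<Longrightarrow> smooth_dfun (\<lambda>p. k * f p)"
  by (rule smooth_dfun_mult[OF smooth_dfun_const])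

lemma smooth_dfun_sum:
  "finite A \<Longrightarrow> (\<And>x. x \<in> A \<Longrightarrow> smooth_dfun (f x)) \<Longrightarrow> smooth_dfun (\<lambda>p. \<Sum>x\<in>A. f x p)"
  by (induction A rule: finite_induct) (auto intro: smooth_dfun_const smooth_dfun_add)

section \<open>Total derivatives\<close>

fun Dt_coeff :: "nat \<Rightarrow> jet \<Rightarrow> jc \<Rightarrow> real" where
  "Dt_coeff i p (X j) = 0"
| "Dt_coeff i p (U \<alpha> I) = p (U \<alpha> (add_mset i I))"
| "Dt_coeff i p (V a I) = p (V a (add_mset i I))"

lemma Dt_eq_sum:
  assumes "finite S" "deps f \<subseteq> S"
  shows "Dt i f p = pd f (X i) p + (\<Sum>c\<in>S. Dt_coeff i p c * pd f c p)"
proof -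
  have "Dt i f p = pd f (X i) p + (\<Sum>c\<in>deps f. Dt_coeff i p c * pd f c p)"
    unfolding Dt_def by (intro arg_cong2[where f = "(+)"] sum.cong) (auto split: jc.split)
  also have "(\<Sum>c\<in>deps f. Dt_coeff i p c * pd f c p) = (\<Sum>c\<in>S. Dt_coeff i p c * pd f c p)"
    by (rule sum.mono_neutral_left) (use assms pd_notin_deps in auto)
  finally show ?thesis .
qed

lemma Dt_eq_sum_deps:
  "finite (deps f) \<Longrightarrow> Dt i f = (\<lambda>p. pd f (X i) p + (\<Sum>c\<in>deps f. Dt_coeff i p c * pd f c p))"
  using Dt_eq_sum by blast

lemma smooth_dfun_Dt_coeff: "smooth_dfun (\<lambda>p. Dt_coeff i p c)"
  by (cases c) (simp_all add: smooth_dfun_const smooth_dfun_coord)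

lemma smooth_dfun_Dt: "smooth_dfun f \<Longrightarrow> smooth_dfun (Dt i f)"
  by (simp add: Dt_eq_sum_deps smooth_dfun_finite_deps smooth_dfun_add smooth_dfun_pd
      smooth_dfun_sum smooth_dfun_mult smooth_dfun_Dt_coeff)

lemma Dl_Nil [simp]: "Dl [] f = f"
  by (simp add: Dl_def)

lemma Dl_Cons: "Dl (i # I) f = Dt i (Dl I f)"
  by (simp add: Dl_def)

lemma Dl_append: "Dl (I @ J) f = Dl I (Dl J f)"
  by (simp add: Dl_def)

lemma smooth_dfun_Dl: "smooth_dfun f \<Longrightarrow> smooth_dfun (Dl I f)"
  by (induction I) (simp_all add: Dl_Cons smooth_dfun_Dt)

lemma pd_add:
  assumes "coordwise_differentiable f" "coordwise_differentiable g"
  shows "pd (\<lambda>p. f p + g p) c p = pd f c p + pd g c p"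
  using pd_eqI[OF DERIV_add[OF has_real_derivative_pd has_real_derivative_pd, OF assms]]
  by simp

lemma pd_mult:
  assumes "coordwise_differentiable f" "coordwise_differentiable g"
  shows "pd (\<lambda>p. f p * g p) c p = pd f c p * g p + f p * pd g c p"
  using pd_eqI[OF DERIV_mult[OF has_real_derivative_pd has_real_derivative_pd, OF assms]]
  by (simp add: mult.commute)

lemma Dt_add:
  assumes "smooth_dfun f" "smooth_dfun g"
  shows "Dt i (\<lambda>p. f p + g p) p = Dt i f p + Dt i g p"
proof -
  let ?S = "deps f \<union> deps g"
  have S: "finite ?S" "deps f \<subseteq> ?S" "deps g \<subseteq> ?S" "deps (\<lambda>p. f p + g p) \<subseteq> ?S"
    using assms deps_binop_subset[of "(+)" f g] by (auto simp: smooth_dfun_finite_deps)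
  show ?thesis
    unfolding Dt_eq_sum[OF S(1,2)] Dt_eq_sum[OF S(1,3)] Dt_eq_sum[OF S(1,4)]
    by (simp add: pd_add assms smooth_dfun_coordwise_differentiable sum.distrib distrib_left)
qed

lemma Dt_mult:
  assumes "smooth_dfun f" "smooth_dfun g"
  shows "Dt i (\<lambda>p. f p * g p) p = Dt i f p * g p + f p * Dt i g p"
proof -
  let ?S = "deps f \<union> deps g"
  have S: "finite ?S" "deps f \<subseteq> ?S" "deps g \<subseteq> ?S" "deps (\<lambda>p. f p * g p) \<subseteq> ?S"
    using assms deps_binop_subset[of "(*)" f g] by (auto simp: smooth_dfun_finite_deps)
  show ?thesis
    unfolding Dt_eq_sum[OF S(1,2)] Dt_eq_sum[OF S(1,3)] Dt_eq_sum[OF S(1,4)]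
    by (simp add: pd_mult assms smooth_dfun_coordwise_differentiable sum.distrib
        sum_distrib_left sum_distrib_right algebra_simps)
qed

lemma Dt_const [simp]: "Dt i (\<lambda>p. k) p = 0"
  using Dt_eq_sum[of "{}" "\<lambda>p. k" i p] by simp

lemma Dt_cmult: "smooth_dfun f \<Longrightarrow> Dt i (\<lambda>p. k * f p) p = k * Dt i f p"
  using Dt_mult[OF smooth_dfun_const, of f i k p] by simp

lemma Dt_sum:
  assumes "finite A" "\<And>x. x \<in> A \<Longrightarrow> smooth_dfun (h x)"
  shows "Dt i (\<lambda>p. \<Sum>x\<in>A. h x p) p = (\<Sum>x\<in>A. Dt i (h x) p)"
  using assms
proof (induction A rule: finite_induct)
  case (insert a A)
  then show ?case
    using Dt_add[of "h a" "\<lambda>p. \<Sum>x\<in>A. h x p"] by (simp add: smooth_dfun_sum)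
qed simp

lemma Dl_add:
  assumes "smooth_dfun f" "smooth_dfun g"
  shows "Dl K (\<lambda>p. f p + g p) = (\<lambda>p. Dl K f p + Dl K g p)"
  by (induction K) (simp_all add: Dl_Cons Dt_add smooth_dfun_Dl assms)

lemma Dl_sum:
  assumes "finite A" "\<And>x. x \<in> A \<Longrightarrow> smooth_dfun (h x)"
  shows "Dl K (\<lambda>p. \<Sum>x\<in>A. h x p) = (\<lambda>p. \<Sum>x\<in>A. Dl K (h x) p)"
  by (induction K) (simp_all add: Dl_Cons Dt_sum smooth_dfun_Dl assms)

lemma Dt_coord: "Dt i (\<lambda>p. p e) p = (if e = X i then 1 else 0) + Dt_coeff i p e"
  using Dt_eq_sum[of "{e}" "\<lambda>p. p e" i p] deps_coord[of e] by (simp add: pd_coord)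

lemma Dt_Dt_coeff_commute: "Dt i (\<lambda>q. Dt_coeff j q c) p = Dt j (\<lambda>q. Dt_coeff i q c) p"
  by (cases c) (simp_all add: Dt_coord add_mset_commute)

section \<open>Commuting total derivatives\<close>

lemma mixed_second_difference_mvt:
  fixes f fx fy fxy fyx :: "real \<Rightarrow> real \<Rightarrow> real"
  assumes fx: "\<And>s t. ((\<lambda>s. f s t) has_real_derivative fx s t) (at s)"
    and fy: "\<And>s t. ((\<lambda>t. f s t) has_real_derivative fy s t) (at t)"
    and fxy: "\<And>s t. ((\<lambda>t. fx s t) has_real_derivative fxy s t) (at t)"
    and fyx: "\<And>s t. ((\<lambda>s. fy s t) has_real_derivative fyx s t) (at s)"
    and h: "h > 0"
  shows "\<exists>s t s' t'. s \<in> {x0<..<x0 + h} \<and> t \<in> {y0<..<y0 + h} \<and> s' \<in> {x0<..<x0 + h} \<and>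
    t' \<in> {y0<..<y0 + h} \<and> fxy s t = fyx s' t'"
proof -
  define x1 y1 where "x1 = x0 + h" and "y1 = y0 + h"
  have "x0 < x1" "y0 < y1" using h by (simp_all add: x1_def y1_def)
  text \<open>Both orders of the mean value theorem applied to the second difference.\<close>
  obtain s where s: "x0 < s" "s < x1"
    "(f x1 y1 - f x1 y0) - (f x0 y1 - f x0 y0) = (x1 - x0) * (fx s y1 - fx s y0)"
    using MVT2[of x0 x1 "\<lambda>x. f x y1 - f x y0" "\<lambda>x. fx x y1 - fx x y0"] \<open>x0 < x1\<close>
      DERIV_diff[OF fx fx] by auto
  obtain t where t: "y0 < t" "t < y1" "fx s y1 - fx s y0 = (y1 - y0) * fxy s t"
    using MVT2[of y0 y1 "fx s" "fxy s"] \<open>y0 < y1\<close> fxy by auto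
  obtain t' where t': "y0 < t'" "t' < y1"
    "(f x1 y1 - f x0 y1) - (f x1 y0 - f x0 y0) = (y1 - y0) * (fy x1 t' - fy x0 t')"
    using MVT2[of y0 y1 "\<lambda>y. f x1 y - f x0 y" "\<lambda>y. fy x1 y - fy x0 y"] \<open>y0 < y1\<close>
      DERIV_diff[OF fy fy] by auto
  obtain s' where s': "x0 < s'" "s' < x1" "fy x1 t' - fy x0 t' = (x1 - x0) * fyx s' t'"
    using MVT2[of x0 x1 "\<lambda>x. fy x t'" "\<lambda>x. fyx x t'"] \<open>x0 < x1\<close> fyx by auto
  have "h * (h * fxy s t) = h * (h * fyx s' t')"
    using s(3) t(3) t'(3) s'(3) by (simp add: x1_def y1_def algebra_simps)
  then have "fxy s t = fyx s' t'" using h by simp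
  then show ?thesis
    using s t s' t' unfolding x1_def y1_def by auto
qed

lemma LIMSEQ_in_shrinking_boxes:
  fixes w :: "nat \<Rightarrow> real \<times> real"
  assumes w: "\<And>n. w n \<in> {x0<..<x0 + 1 / Suc n} \<times> {y0<..<y0 + 1 / Suc n}"
  shows "w \<longlonglongrightarrow> (x0, y0)"
proof -
  have x: "(\<lambda>n. x0 + 1 / Suc n) \<longlonglongrightarrow> x0" and y: "(\<lambda>n. y0 + 1 / Suc n) \<longlonglongrightarrow> y0"
    using tendsto_add[OF tendsto_const LIMSEQ_Suc[OF lim_inverse_n']] by auto
  have "x0 \<le> fst (w n) \<and> fst (w n) \<le> x0 + 1 / Suc n \<and> y0 \<le> snd (w n) \<and> snd (w n) \<le> y0 + 1 / Suc n"
    for n using w[of n] by (auto simp: mem_Times_iff)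
  then have "(\<lambda>n. fst (w n)) \<longlonglongrightarrow> x0" "(\<lambda>n. snd (w n)) \<longlonglongrightarrow> y0"
    by (auto intro!: tendsto_sandwich[OF always_eventually always_eventually tendsto_const x]
        tendsto_sandwich[OF always_eventually always_eventually tendsto_const y])
  then show ?thesis using tendsto_Pair by fastforce
qed

lemma mixed_partials_eq:
  fixes f fx fy fxy fyx :: "real \<Rightarrow> real \<Rightarrow> real"
  assumes fx: "\<And>s t. ((\<lambda>s. f s t) has_real_derivative fx s t) (at s)"
    and fy: "\<And>s t. ((\<lambda>t. f s t) has_real_derivative fy s t) (at t)"
    and fxy: "\<And>s t. ((\<lambda>t. fx s t) has_real_derivative fxy s t) (at t)"
    and fyx: "\<And>s t. ((\<lambda>s. fy s t) has_real_derivative fyx s t) (at s)"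
    and cont_xy: "continuous_on UNIV (\<lambda>z. fxy (fst z) (snd z))"
    and cont_yx: "continuous_on UNIV (\<lambda>z. fyx (fst z) (snd z))"
  shows "fxy x0 y0 = fyx x0 y0"
proof -
  have "\<forall>n. \<exists>zz. fst zz \<in> {x0<..<x0 + 1 / Suc n} \<times> {y0<..<y0 + 1 / Suc n} \<and>
      snd zz \<in> {x0<..<x0 + 1 / Suc n} \<times> {y0<..<y0 + 1 / Suc n} \<and>
      fxy (fst (fst zz)) (snd (fst zz)) = fyx (fst (snd zz)) (snd (snd zz))"
    (is "\<forall>n. \<exists>zz. ?P n zz")
  proof
    fix n
    obtain s t s' t' where "s \<in> {x0<..<x0 + 1 / Suc n}" "t \<in> {y0<..<y0 + 1 / Suc n}"
      "s' \<in> {x0<..<x0 + 1 / Suc n}" "t' \<in> {y0<..<y0 + 1 / Suc n}" "fxy s t = fyx s' t'"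
      using mixed_second_difference_mvt[OF fx fy fxy fyx, of "1 / Suc n" x0 y0] by auto
    then show "\<exists>zz. ?P n zz" by (intro exI[of _ "((s, t), (s', t'))"]) simp
  qed
  from choice[OF this] obtain Z where Z: "\<And>n. ?P n (Z n)" by blast
  define z z' where "z n = fst (Z n)" and "z' n = snd (Z n)" for n
  have z: "\<And>n. z n \<in> {x0<..<x0 + 1 / Suc n} \<times> {y0<..<y0 + 1 / Suc n}"
    and z': "\<And>n. z' n \<in> {x0<..<x0 + 1 / Suc n} \<times> {y0<..<y0 + 1 / Suc n}"
    and eq: "\<And>n. fxy (fst (z n)) (snd (z n)) = fyx (fst (z' n)) (snd (z' n))"
    using Z by (simp_all add: z_def z'_def)
  have "(\<lambda>n. fxy (fst (z n)) (snd (z n))) \<longlonglongrightarrow> fxy x0 y0"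
    using continuous_on_tendsto_compose[OF cont_xy LIMSEQ_in_shrinking_boxes[OF z]] by simp
  moreover have "(\<lambda>n. fyx (fst (z' n)) (snd (z' n))) \<longlonglongrightarrow> fyx x0 y0"
    using continuous_on_tendsto_compose[OF cont_yx LIMSEQ_in_shrinking_boxes[OF z']] by simp
  ultimately show ?thesis
    unfolding eq using LIMSEQ_unique by blast
qed

lemma pd_commute:
  assumes f: "smooth_dfun f"
  shows "pd (pd f a) b p = pd (pd f b) a p"
proof (cases "a = b")
  case False
  define q where "q s t = p(a := s, b := t)" for s t
  have qa: "(q s t)(a := x) = q x t" and qb: "(q s t)(b := x) = q s x" for s t x
    using False by (simp_all add: q_def fun_upd_twist)
  have smooth: "smooth_dfun (pd f a)" "smooth_dfun (pd f b)"
    "smooth_dfun (pd (pd f a) b)" "smooth_dfun (pd (pd f b) a)"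
    using f by (simp_all add: smooth_dfun_pd)
  have deriv_a: "((\<lambda>x. g (q x t)) has_real_derivative pd g a (q s t)) (at s)"
    if "smooth_dfun g" for g s t
    using has_real_derivative_pd[OF smooth_dfun_coordwise_differentiable[OF that], of "q 0 t" a s]
    by (simp add: qa)
  have deriv_b: "((\<lambda>x. g (q s x)) has_real_derivative pd g b (q s t)) (at t)"
    if "smooth_dfun g" for g s t
    using has_real_derivative_pd[OF smooth_dfun_coordwise_differentiable[OF that], of "q s 0" b t]
    by (simp add: qb)
  have q_cont: "continuous_on UNIV (\<lambda>z. q (fst z) (snd z))"
  proof (rule continuous_on_coordinatewise_then_product)
    show "continuous_on UNIV (\<lambda>z. q (fst z) (snd z) c)" for c
      by (cases "c = b"; cases "c = a") (auto simp: q_def intro!: continuous_intros)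
  qed
  have cont: "continuous_on UNIV (\<lambda>z. g (q (fst z) (snd z)))" if "smooth_dfun g" for g
    using continuous_on_compose[OF q_cont continuous_on_subset[OF smooth_dfun_continuous[OF that]]]
    by (simp add: o_def)
  have "pd (pd f a) b (q (p a) (p b)) = pd (pd f b) a (q (p a) (p b))"
    by (rule mixed_partials_eq[where f = "\<lambda>s t. f (q s t)"])
      (use f smooth in \<open>auto intro: deriv_a deriv_b cont\<close>)
  then show ?thesis by (simp add: q_def)
qed simp

lemma Dt_Dt_eq:
  assumes f: "smooth_dfun f"
  shows "Dt i (Dt j f) p =
     pd (pd f (X j)) (X i) p + (\<Sum>d\<in>deps f. Dt_coeff i p d * pd (pd f (X j)) d p)
   + (\<Sum>c\<in>deps f. Dt i (\<lambda>q. Dt_coeff j q c) p * pd f c p)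
   + (\<Sum>c\<in>deps f. Dt_coeff j p c * pd (pd f c) (X i) p)
   + (\<Sum>c\<in>deps f. \<Sum>d\<in>deps f. Dt_coeff j p c * Dt_coeff i p d * pd (pd f c) d p)"
proof -
  let ?D = "deps f"
  have fin: "finite ?D" using f smooth_dfun_finite_deps by blast
  have smooth_term: "smooth_dfun (\<lambda>q. Dt_coeff j q c * pd f c q)" for c
    by (rule smooth_dfun_mult[OF smooth_dfun_Dt_coeff smooth_dfun_pd[OF f]])
  have Dt_pd: "Dt i (pd f c) p = pd (pd f c) (X i) p + (\<Sum>d\<in>?D. Dt_coeff i p d * pd (pd f c) d p)" for c
    by (rule Dt_eq_sum[OF fin deps_pd_subset])
  have "Dt i (Dt j f) p = Dt i (pd f (X j)) p + (\<Sum>c\<in>?D. Dt i (\<lambda>q. Dt_coeff j q c * pd f c q) p)"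
    unfolding Dt_eq_sum_deps[OF fin]
    by (simp add: Dt_add Dt_sum fin smooth_term smooth_dfun_pd[OF f] smooth_dfun_sum)
  also have "\<dots> = Dt i (pd f (X j)) p
      + (\<Sum>c\<in>?D. Dt i (\<lambda>q. Dt_coeff j q c) p * pd f c p + Dt_coeff j p c * Dt i (pd f c) p)"
    by (simp add: Dt_mult[OF smooth_dfun_Dt_coeff smooth_dfun_pd[OF f]])
  finally show ?thesis
    unfolding Dt_pd by (simp add: sum.distrib distrib_left sum_distrib_left algebra_simps)
qed

lemma Dt_commute:
  assumes f: "smooth_dfun f"
  shows "Dt i (Dt j f) = Dt j (Dt i f)"
proof
  fix p
  let ?D = "deps f"
  have "(\<Sum>c\<in>?D. \<Sum>d\<in>?D. Dt_coeff j p c * Dt_coeff i p d * pd (pd f c) d p)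
      = (\<Sum>d\<in>?D. \<Sum>c\<in>?D. Dt_coeff i p d * Dt_coeff j p c * pd (pd f d) c p)"
    by (subst sum.swap) (simp add: pd_commute[OF f] mult.commute)
  then show "Dt i (Dt j f) p = Dt j (Dt i f) p"
    unfolding Dt_Dt_eq[OF f] by (simp add: pd_commute[OF f] Dt_Dt_coeff_commute)
qed

lemma Dl_insort: "smooth_dfun f \<Longrightarrow> Dl (insort i I) f = Dt i (Dl I f)"
  by (induction I) (auto simp: Dl_Cons Dt_commute smooth_dfun_Dl)

lemma Dl_mset_eq:
  assumes "smooth_dfun f" "mset I = mset J"
  shows "Dl I f = Dl J f"
proof -
  have "Dl (sort I) f = Dl I f" for I
    by (induction I) (simp_all add: Dl_insort Dl_Cons assms(1))
  then show ?thesis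
    by (metis assms(2) sorted_list_of_multiset_mset)
qed

lemma Dl_Cons_eq_Dl_Dt: "smooth_dfun f \<Longrightarrow> Dl (i # K) f = Dl K (Dt i f)"
  using Dl_mset_eq[of f "i # K" "K @ [i]"] by (simp add: Dl_append Dl_def)

section \<open>Substituting the adjoint-symmetry for the auxiliary variables\<close>

lemma eq_upd_outside_deps:
  assumes "finite S" "S \<inter> deps f = {}"
  shows "f (\<lambda>c. if c \<in> S then r c else p c) = f p"
  using assms
proof (induction S rule: finite_induct)
  case (insert s S)
  have "(\<lambda>c. if c \<in> insert s S then r c else p c) = (\<lambda>c. if c \<in> S then r c else p c)(s := r s)"
    by auto
  then show ?case using insert notin_deps_upd[of s f] by simp
qed simp

text \<open>\<open>deps\<close> only detects changes of one coordinate at a time; it is continuity in the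
  product topology that prevents a function from depending jointly on infinitely many
  coordinates.\<close>

lemma eq_if_eq_on_deps:
  assumes "continuous_on UNIV f" "\<forall>c\<in>deps f. p c = p' c"
  shows "f p = f p'"
proof (rule ccontr)
  assume ne: "f p \<noteq> f p'"
  define e where "e = dist (f p) (f p')"
  have "open (f -` ball (f p') e)"
    by (rule open_vimage[OF open_ball assms(1)])
  then have "openin (product_topology (\<lambda>i. euclidean) UNIV) (f -` ball (f p') e)"
    by (simp add: open_fun_def)
  moreover have "p' \<in> f -` ball (f p') e" using ne by (simp add: e_def)
  ultimately have "\<exists>U. p' \<in> (\<Pi>\<^sub>E i\<in>UNIV. U i) \<and> (\<forall>i. openin euclidean (U i)) \<and>
      finite {i. U i \<noteq> topspace euclidean} \<and> (\<Pi>\<^sub>E i\<in>UNIV. U i) \<subseteq> f -` ball (f p') e"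
    by (rule product_topology_open_contains_basis)
  then obtain U where U: "p' \<in> (\<Pi>\<^sub>E i\<in>UNIV. U i)" "finite {i. U i \<noteq> UNIV}"
      "(\<Pi>\<^sub>E i\<in>UNIV. U i) \<subseteq> f -` ball (f p') e"
    by auto
  define S where "S = {i. U i \<noteq> UNIV} - deps f"
  have "finite S" using U(2) by (simp add: S_def)
  define q where "q c = (if c \<in> S then p' c else p c)" for c
  have "q c \<in> U c" for c
  proof (cases "c \<in> S")
    case True
    then show ?thesis using U(1) by (auto simp: q_def)
  next
    case False
    then have "c \<in> deps f \<or> U c = UNIV" by (auto simp: S_def)
    then show ?thesis using U(1) assms(2) by (auto simp: q_def PiE_iff)
  qed
  then have "q \<in> (\<Pi>\<^sub>E i\<in>UNIV. U i)" by auto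
  then have "f q \<in> ball (f p') e" using U(3) by blast
  moreover have "f q = f p"
    unfolding q_def by (rule eq_upd_outside_deps) (use \<open>finite S\<close> in \<open>auto simp: S_def\<close>)
  ultimately show False by (simp add: e_def dist_commute)
qed

definition v_free :: "dfun \<Rightarrow> bool" where
  "v_free f \<longleftrightarrow> (\<forall>a I. V a I \<notin> deps f)"

lemma v_free_binop: "v_free f \<Longrightarrow> v_free g \<Longrightarrow> v_free (\<lambda>p. h (f p) (g p))"
  using deps_binop_subset[of h f g] unfolding v_free_def by blast

lemma v_free_const: "v_free (\<lambda>p. k)"
  by (simp add: v_free_def)

lemma v_free_pd: "v_free f \<Longrightarrow> v_free (pd f c)"
  using deps_pd_subset[of f c] unfolding v_free_def by blast

lemma v_free_sum: "finite A \<Longrightarrow> (\<And>x. x \<in> A \<Longrightarrow> v_free (h x)) \<Longrightarrow> v_free (\<lambda>p. \<Sum>x\<in>A. h x p)"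
  using deps_sum_subset[of A h] unfolding v_free_def by blast

lemma v_free_Dt_coeff: "(\<And>a I. c \<noteq> V a I) \<Longrightarrow> v_free (\<lambda>p. Dt_coeff i p c)"
  by (cases c) (auto simp: v_free_def dest: subsetD[OF deps_coord])

lemma v_free_Dt:
  assumes f: "smooth_dfun f" and v: "v_free f"
  shows "v_free (Dt i f)"
proof -
  have fin: "finite (deps f)" using f by (rule smooth_dfun_finite_deps)
  have "v_free (\<lambda>p. Dt_coeff i p c * pd f c p)" if "c \<in> deps f" for c
  proof -
    have "c \<noteq> V a I" for a I using that v unfolding v_free_def by blast
    then show ?thesis
      using v_free_binop[where h = "(*)", OF v_free_Dt_coeff v_free_pd[OF v]] by blast
  qed
  then have "v_free (\<lambda>p. \<Sum>c\<in>deps f. Dt_coeff i p c * pd f c p)"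
    by (rule v_free_sum[OF fin])
  then show ?thesis
    unfolding Dt_eq_sum_deps[OF fin] by (rule v_free_binop[where h = "(+)", OF v_free_pd[OF v]])
qed

lemma v_free_Dl: "smooth_dfun f \<Longrightarrow> v_free f \<Longrightarrow> v_free (Dl I f)"
  by (induction I) (simp_all add: Dl_Cons v_free_Dt smooth_dfun_Dl)

definition subst_jet :: "(nat \<Rightarrow> dfun) \<Rightarrow> jet \<Rightarrow> jet" where
  "subst_jet Q p = (\<lambda>c. case c of
       V a I \<Rightarrow> Dl (sorted_list_of_multiset I) (Q a) p
     | _ \<Rightarrow> p c)"

lemma subst_v_eq: "subst_v Q f p = f (subst_jet Q p)"
  unfolding subst_v_def subst_jet_def ..

lemma subst_jet_V [simp]: "subst_jet Q p (V a I) = Dl (sorted_list_of_multiset I) (Q a) p"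
  by (simp add: subst_jet_def)

lemma subst_jet_not_V: "(\<And>a I. c \<noteq> V a I) \<Longrightarrow> subst_jet Q p c = p c"
  by (cases c) (auto simp: subst_jet_def)

lemma v_free_subst_jet:
  assumes "smooth_dfun g" "v_free g"
  shows "g (subst_jet Q p) = g p"
proof (rule eq_if_eq_on_deps[OF smooth_dfun_continuous[OF assms(1)]], intro ballI)
  fix c assume "c \<in> deps g"
  then have "c \<noteq> V a I" for a I using assms(2) unfolding v_free_def by blast
  then show "subst_jet Q p c = p c" by (rule subst_jet_not_V)
qed

text \<open>The auxiliary variables enter \<open>\<Phi>\<close> only through linear combinations
  \<open>v\<^sup>a\<^sub>I g\<close> with \<open>v\<close>-free coefficients \<open>g\<close>, a class preserved by total derivatives; on it, the
  substitution \<open>v := Q\<close> commutes with total derivatives.\<close>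

lemma Dl_v_term_subst_jet:
  assumes Q: "smooth_dfun (Q a)" and "smooth_dfun g" "v_free g"
  shows "Dl K (\<lambda>q. q (V a I) * g q) (subst_jet Q p)
       = Dl K (\<lambda>q. Dl (sorted_list_of_multiset I) (Q a) q * g q) p"
  using assms(2,3)
proof (induction K arbitrary: I g)
  case Nil
  then show ?case by (simp add: v_free_subst_jet)
next
  case (Cons i K)
  let ?D = "\<lambda>I. Dl (sorted_list_of_multiset I) (Q a)"
  have "Dt i (?D I) = ?D (add_mset i I)"
    using Dl_mset_eq[OF Q, of "i # sorted_list_of_multiset I"] by (simp add: Dl_Cons)
  then have Dt_Q_term: "Dt i (\<lambda>q. ?D I q * g q) = (\<lambda>q. ?D (add_mset i I) q * g q + ?D I q * Dt i g q)"
    using Cons.prems by (simp add: fun_eq_iff Dt_mult smooth_dfun_Dl[OF Q])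
  have Dt_v_term: "Dt i (\<lambda>q. q (V a I) * g q) = (\<lambda>q. q (V a (add_mset i I)) * g q + q (V a I) * Dt i g q)"
    using Cons.prems by (simp add: fun_eq_iff Dt_mult smooth_dfun_coord Dt_coord)
  have smooth: "smooth_dfun (\<lambda>q. q (V a J) * h q)" "smooth_dfun (\<lambda>q. Dl L (Q a) q * h q)"
    if "smooth_dfun h" for h J L
    using that by (simp_all add: smooth_dfun_mult smooth_dfun_coord smooth_dfun_Dl[OF Q])
  have g': "smooth_dfun (Dt i g)" "v_free (Dt i g)"
    using Cons.prems by (simp_all add: smooth_dfun_Dt v_free_Dt)
  show ?case
    using Cons.IH[where I = "add_mset i I" and g = g] Cons.IH[where I = I and g = "Dt i g", OF g'] Cons.prems g'
    by (simp add: Dl_Cons_eq_Dl_Dt smooth Dt_Q_term Dt_v_term Dl_add)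
qed

lemma Dl_v_combination_subst_jet:
  assumes "\<And>a. a < M \<Longrightarrow> smooth_dfun (Q a)" "\<And>a. a < M \<Longrightarrow> smooth_dfun (g a)"
    and "\<And>a. a < M \<Longrightarrow> v_free (g a)"
  shows "Dl K (\<lambda>q. \<Sum>a<M. vvar a q * g a q) (subst_jet Q p) = Dl K (\<lambda>q. \<Sum>a<M. Q a q * g a q) p"
proof -
  have "Dl K (\<lambda>q. q (V a {#}) * g a q) (subst_jet Q p) = Dl K (\<lambda>q. Q a q * g a q) p"
    if "a < M" for a
    using Dl_v_term_subst_jet[where I = "{#}" and Q = Q and a = a and g = "g a", OF assms[OF that]] by simp
  moreover have "Dl K (\<lambda>q. \<Sum>a<M. vvar a q * g a q) = (\<lambda>q. \<Sum>a<M. Dl K (\<lambda>q. q (V a {#}) * g a q) q)"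
    unfolding vvar_def by (rule Dl_sum) (simp_all add: assms smooth_dfun_mult smooth_dfun_coord)
  moreover have "Dl K (\<lambda>q. \<Sum>a<M. Q a q * g a q) = (\<lambda>q. \<Sum>a<M. Dl K (\<lambda>q. Q a q * g a q) q)"
    by (rule Dl_sum) (simp_all add: assms smooth_dfun_mult)
  ultimately show ?thesis by simp
qed

lemma dU_eq: "dU f \<alpha> I = (\<lambda>p. (1 / real (card {J. mset J = mset I})) * pd f (U \<alpha> (mset I)) p)"
  by (simp add: dU_def fun_eq_iff)

lemma smooth_dfun_dU: "smooth_dfun f \<Longrightarrow> smooth_dfun (dU f \<alpha> I)"
  unfolding dU_eq by (rule smooth_dfun_cmult[OF smooth_dfun_pd])

lemma v_free_dU: "v_free f \<Longrightarrow> v_free (dU f \<alpha> I)"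
  unfolding dU_eq by (rule v_free_binop[OF v_free_const v_free_pd])

lemma dU_mset_eq: "mset I = mset J \<Longrightarrow> dU f \<alpha> I = dU f \<alpha> J"
  by (simp add: dU_def fun_eq_iff)

lemma subst_v_Phi:
  assumes F: "\<And>a. a < M \<Longrightarrow> smooth_dfun (F a) \<and> v_free (F a)"
    and P: "\<And>\<alpha>. \<alpha> < m \<Longrightarrow> smooth_dfun (P \<alpha>) \<and> v_free (P \<alpha>)"
    and Q: "\<And>a. a < M \<Longrightarrow> smooth_dfun (Q a)"
  shows "subst_v Q (Phi n m M N P F i) = Psi n m M N P Q F i"
proof
  fix p
  have "Dl K (\<lambda>q. \<Sum>a<M. vvar a q * dU (F a) \<alpha> I q) (subst_jet Q p)
      = Dl K (\<lambda>q. \<Sum>a<M. Q a q * dU (F a) \<alpha> I q) p" for K \<alpha> I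
    using F by (intro Dl_v_combination_subst_jet Q smooth_dfun_dU v_free_dU) auto
  moreover have "Dl J (P \<alpha>) (subst_jet Q p) = Dl J (P \<alpha>) p" if "\<alpha> < m" for J \<alpha>
    using P[OF that] by (simp add: v_free_subst_jet smooth_dfun_Dl v_free_Dl)
  ultimately show "subst_v Q (Phi n m M N P F i) p = Psi n m M N P Q F i p"
    unfolding subst_v_eq Phi_def Psi_def by (intro sum.cong refl) auto
qed

section \<open>The divergence identity\<close>

lemma finite_mis: "finite (mis n k)"
  unfolding mis_def by (rule finite_lists_length_eq) simp

lemma mis_0 [simp]: "mis n 0 = {[]}"
  unfolding mis_def by auto

lemma sum_mis_Suc: "(\<Sum>i<n. \<Sum>J\<in>mis n j. g (i # J)) = (\<Sum>J\<in>mis n (Suc j). g J)"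
proof -
  have "mis n (Suc j) = (\<lambda>(i, J). i # J) ` ({..<n} \<times> mis n j)"
  proof (intro equalityI subsetI)
    fix L assume "L \<in> mis n (Suc j)"
    then obtain i J where "L = i # J" "i < n" "J \<in> mis n j"
      unfolding mis_def by (cases L) auto
    then show "L \<in> (\<lambda>(i, J). i # J) ` ({..<n} \<times> mis n j)" by force
  qed (auto simp: mis_def)
  moreover have "inj_on (\<lambda>(i, J). i # J) ({..<n} \<times> mis n j)"
    by (auto simp: inj_on_def)
  ultimately show ?thesis
    by (simp add: sum.reindex sum.cartesian_product split_def)
qed

definition index_splits :: "nat \<Rightarrow> nat \<Rightarrow> (nat list \<times> nat list) set" where
  "index_splits n k = {(J, K). set J \<subseteq> {..<n} \<and> set K \<subseteq> {..<n} \<and> length J + length K = k - 1}"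

lemma index_splits_eq: "1 \<le> k \<Longrightarrow> index_splits n k = (\<Union>j<k. mis n j \<times> mis n (k - 1 - j))"
  unfolding index_splits_def mis_def by auto

lemma finite_index_splits: "finite (index_splits n k)"
proof -
  have "index_splits n k \<subseteq> (\<Union>j\<le>k. mis n j) \<times> (\<Union>j\<le>k. mis n j)"
    unfolding index_splits_def mis_def by auto
  then show ?thesis by (rule finite_subset) (simp add: finite_mis)
qed

lemma sum_index_splits:
  assumes "1 \<le> k"
  shows "(\<Sum>JK\<in>index_splits n k. g JK) = (\<Sum>j<k. \<Sum>J\<in>mis n j. \<Sum>K\<in>mis n (k - 1 - j). g (J, K))"
proof -
  have "(\<Sum>JK\<in>(\<Union>j<k. mis n j \<times> mis n (k - 1 - j)). g JK)
      = (\<Sum>j<k. \<Sum>JK\<in>mis n j \<times> mis n (k - 1 - j). g JK)"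
    by (rule sum.UNION_disjoint) (simp_all add: finite_mis, auto simp: mis_def)
  then show ?thesis
    by (simp add: index_splits_eq[OF assms] sum.cartesian_product split_def)
qed

lemma sum_splits_telescope:
  fixes W :: "nat list \<Rightarrow> nat list \<Rightarrow> real"
  assumes "1 \<le> k"
  shows "(\<Sum>i<n. \<Sum>j<k. \<Sum>J\<in>mis n j. \<Sum>K\<in>mis n (k - 1 - j). (-1) ^ (k - 1 - j) * (W (i # J) K + W J (i # K)))
       = (\<Sum>I\<in>mis n k. W I []) - (-1) ^ k * (\<Sum>I\<in>mis n k. W [] I)"
proof -
  define S where "S j = (\<Sum>J\<in>mis n j. \<Sum>K\<in>mis n (k - j). (-1) ^ (k - j) * W J K)" for j
  have step: "(\<Sum>i<n. \<Sum>J\<in>mis n j. \<Sum>K\<in>mis n (k - 1 - j). (-1) ^ (k - 1 - j) * (W (i # J) K + W J (i # K)))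
      = S (Suc j) - S j" if "j < k" for j
  proof -
    have k: "k - j = Suc (k - 1 - j)" "k - Suc j = k - 1 - j" using that by auto
    have "(\<Sum>i<n. \<Sum>J\<in>mis n j. \<Sum>K\<in>mis n (k - 1 - j). (-1) ^ (k - 1 - j) * W (i # J) K) = S (Suc j)"
      unfolding S_def k(2) by (rule sum_mis_Suc)
    moreover have "(\<Sum>i<n. \<Sum>J\<in>mis n j. \<Sum>K\<in>mis n (k - 1 - j). (-1) ^ (k - 1 - j) * W J (i # K)) = - S j"
    proof -
      have "(\<Sum>i<n. \<Sum>J\<in>mis n j. \<Sum>K\<in>mis n (k - 1 - j). (-1) ^ (k - 1 - j) * W J (i # K))
          = (\<Sum>J\<in>mis n j. \<Sum>i<n. \<Sum>K\<in>mis n (k - 1 - j). (-1) ^ (k - 1 - j) * W J (i # K))"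
        by (rule sum.swap)
      also have "\<dots> = (\<Sum>J\<in>mis n j. \<Sum>K\<in>mis n (k - j). (-1) ^ (k - 1 - j) * W J K)"
        unfolding k(1) by (intro sum.cong refl sum_mis_Suc)
      also have "\<dots> = - S j"
        unfolding S_def k(1) by (simp add: sum_negf)
      finally show ?thesis .
    qed
    ultimately show ?thesis
      by (simp add: distrib_left sum.distrib)
  qed
  have "(\<Sum>i<n. \<Sum>j<k. \<Sum>J\<in>mis n j. \<Sum>K\<in>mis n (k - 1 - j). (-1) ^ (k - 1 - j) * (W (i # J) K + W J (i # K)))
      = (\<Sum>j<k. \<Sum>i<n. \<Sum>J\<in>mis n j. \<Sum>K\<in>mis n (k - 1 - j). (-1) ^ (k - 1 - j) * (W (i # J) K + W J (i # K)))"
    by (rule sum.swap)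
  also have "\<dots> = (\<Sum>j<k. S (Suc j) - S j)"
    by (intro sum.cong refl step) simp
  also have "\<dots> = S k - S 0" by (rule sum_lessThan_telescope)
  finally show ?thesis
    by (simp add: S_def sum_distrib_left)
qed

lemma sum_Dt_splits:
  fixes w :: dfun and B :: "nat list \<Rightarrow> dfun"
  assumes w: "smooth_dfun w" and B: "\<And>I. smooth_dfun (B I)"
    and B_mset: "\<And>I J. mset I = mset J \<Longrightarrow> B I = B J" and k: "1 \<le> k"
  shows "(\<Sum>i<n. \<Sum>JK\<in>index_splits n k. (-1) ^ length (snd JK) *
            Dt i (\<lambda>q. Dl (fst JK) w q * Dl (snd JK) (B (fst JK @ snd JK @ [i])) q) p)
       = (\<Sum>I\<in>mis n k. Dl I w p * B I p) - (-1) ^ k * (\<Sum>I\<in>mis n k. w p * Dl I (B I) p)"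
proof -
  define W where "W J K = Dl J w p * Dl K (B (J @ K)) p" for J K
  have "Dt i (\<lambda>q. Dl J w q * Dl K (B (J @ K @ [i])) q) p = W (i # J) K + W J (i # K)" for i J K
  proof -
    have "B (J @ K @ [i]) = B ((i # J) @ K)" "B (J @ K @ [i]) = B (J @ i # K)"
      by (simp_all add: B_mset)
    then show ?thesis
      unfolding Dt_mult[OF smooth_dfun_Dl[OF w] smooth_dfun_Dl[OF B]] W_def
      by (simp add: Dl_Cons)
  qed
  then have "(\<Sum>i<n. \<Sum>JK\<in>index_splits n k. (-1) ^ length (snd JK) *
            Dt i (\<lambda>q. Dl (fst JK) w q * Dl (snd JK) (B (fst JK @ snd JK @ [i])) q) p)
      = (\<Sum>i<n. \<Sum>j<k. \<Sum>J\<in>mis n j. \<Sum>K\<in>mis n (k - 1 - j). (-1) ^ (k - 1 - j) * (W (i # J) K + W J (i # K)))"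
    by (simp add: sum_index_splits[OF k] mis_def)
  also have "\<dots> = (\<Sum>I\<in>mis n k. W I []) - (-1) ^ k * (\<Sum>I\<in>mis n k. W [] I)"
    by (rule sum_splits_telescope[OF k])
  finally show ?thesis by (simp add: W_def)
qed

definition contracted_dU :: "nat \<Rightarrow> (nat \<Rightarrow> dfun) \<Rightarrow> (nat \<Rightarrow> dfun) \<Rightarrow> nat \<Rightarrow> nat list \<Rightarrow> dfun" where
  "contracted_dU M Q F \<alpha> I q = (\<Sum>a<M. Q a q * dU (F a) \<alpha> I q)"

lemma sum_mult_frechet:
  "(\<Sum>a<M. Q a p * frechet n m N P F a p)
     = (\<Sum>k\<le>N. \<Sum>\<alpha><m. \<Sum>I\<in>mis n k. Dl I (P \<alpha>) p * contracted_dU M Q F \<alpha> I p)"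
proof -
  have swap: "(\<Sum>I\<in>mis n k. \<Sum>\<alpha><m. g I \<alpha>) = (\<Sum>\<alpha><m. \<Sum>I\<in>mis n k. g I \<alpha>)" for k and g :: "_ \<Rightarrow> _ \<Rightarrow> real"
    by (rule sum.swap)
  have "(\<Sum>a<M. Q a p * frechet n m N P F a p)
      = (\<Sum>a<M. \<Sum>k\<le>N. \<Sum>I\<in>mis n k. \<Sum>\<alpha><m. Q a p * (Dl I (P \<alpha>) p * dU (F a) \<alpha> I p))"
    by (simp add: frechet_def sum_distrib_left)
  also have "\<dots> = (\<Sum>k\<le>N. \<Sum>I\<in>mis n k. \<Sum>\<alpha><m. \<Sum>a<M. Q a p * (Dl I (P \<alpha>) p * dU (F a) \<alpha> I p))"
    by (simp only: sum.swap[of _ "{..<M}"])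
  finally show ?thesis
    by (simp add: swap contracted_dU_def sum_distrib_left mult_ac)
qed

lemma sum_mult_adjoint:
  "(\<Sum>\<alpha><m. P \<alpha> p * adjoint n M N Q F \<alpha> p)
     = (\<Sum>k\<le>N. \<Sum>\<alpha><m. (-1) ^ k * (\<Sum>I\<in>mis n k. P \<alpha> p * Dl I (contracted_dU M Q F \<alpha> I) p))"
  unfolding adjoint_def contracted_dU_def
  by (subst sum.swap) (simp add: sum_distrib_left mult_ac)

lemma Psi_eq:
  "Psi n m M N P Q F i = (\<lambda>p. \<Sum>k\<in>{1..N}. \<Sum>\<alpha><m. \<Sum>JK\<in>index_splits n k. (-1) ^ length (snd JK) *
     (Dl (fst JK) (P \<alpha>) p * Dl (snd JK) (contracted_dU M Q F \<alpha> (fst JK @ snd JK @ [i])) p))"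
  unfolding Psi_def index_splits_def contracted_dU_def
  by (simp add: fun_eq_iff mult.assoc sum.swap[of _ _ "{..<m}"])

lemma smooth_dfun_contracted_dU:
  assumes "\<And>a. a < M \<Longrightarrow> smooth_dfun (Q a) \<and> smooth_dfun (F a)"
  shows "smooth_dfun (contracted_dU M Q F \<alpha> I)"
  unfolding contracted_dU_def[abs_def]
  using assms by (intro smooth_dfun_sum smooth_dfun_mult smooth_dfun_dU) auto

lemma contracted_dU_mset_eq: "mset I = mset J \<Longrightarrow> contracted_dU M Q F \<alpha> I = contracted_dU M Q F \<alpha> J"
  unfolding contracted_dU_def[abs_def] by (simp add: dU_mset_eq[of I J])

lemma sum_Dt_Psi:
  assumes QF: "\<And>a. a < M \<Longrightarrow> smooth_dfun (Q a) \<and> smooth_dfun (F a)"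
    and P: "\<And>\<alpha>. \<alpha> < m \<Longrightarrow> smooth_dfun (P \<alpha>)"
  shows "(\<Sum>i<n. Dt i (Psi n m M N P Q F i) p)
    = (\<Sum>k\<in>{1..N}. \<Sum>\<alpha><m. (\<Sum>I\<in>mis n k. Dl I (P \<alpha>) p * contracted_dU M Q F \<alpha> I p)
        - (-1) ^ k * (\<Sum>I\<in>mis n k. P \<alpha> p * Dl I (contracted_dU M Q F \<alpha> I) p))"
proof -
  let ?B = "contracted_dU M Q F"
  have B: "smooth_dfun (?B \<alpha> I)" for \<alpha> I
    by (rule smooth_dfun_contracted_dU[OF QF])
  have summand: "smooth_dfun (\<lambda>q. Dl J (P \<alpha>) q * Dl K (?B \<alpha> I) q)" if "\<alpha> < m" for J K I \<alpha>
    using P[OF that] B by (simp add: smooth_dfun_mult smooth_dfun_Dl)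
  define T where "T k \<alpha> i q = (\<Sum>JK\<in>index_splits n k. (-1) ^ length (snd JK) *
      (Dl (fst JK) (P \<alpha>) q * Dl (snd JK) (?B \<alpha> (fst JK @ snd JK @ [i])) q))" for k \<alpha> i q
  have T: "smooth_dfun (T k \<alpha> i)" if "\<alpha> < m" for k \<alpha> i
    unfolding T_def[abs_def]
    using that by (intro smooth_dfun_sum smooth_dfun_cmult summand finite_index_splits)
  have Dt_T: "Dt i (T k \<alpha> i) p = (\<Sum>JK\<in>index_splits n k. (-1) ^ length (snd JK) *
      Dt i (\<lambda>q. Dl (fst JK) (P \<alpha>) q * Dl (snd JK) (?B \<alpha> (fst JK @ snd JK @ [i])) q) p)"
    if "\<alpha> < m" for k \<alpha> i
    unfolding T_def[abs_def] using that
    by (simp add: Dt_sum Dt_cmult smooth_dfun_cmult summand finite_index_splits)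
  have "Dt i (Psi n m M N P Q F i) p = (\<Sum>k\<in>{1..N}. \<Sum>\<alpha><m. Dt i (T k \<alpha> i) p)" for i
  proof -
    have "Psi n m M N P Q F i = (\<lambda>q. \<Sum>k\<in>{1..N}. \<Sum>\<alpha><m. T k \<alpha> i q)"
      unfolding Psi_eq T_def ..
    moreover have "smooth_dfun (\<lambda>q. \<Sum>\<alpha><m. T k \<alpha> i q)" for k
      by (rule smooth_dfun_sum) (simp_all add: T)
    moreover have "Dt i (\<lambda>q. \<Sum>\<alpha><m. T k \<alpha> i q) p = (\<Sum>\<alpha><m. Dt i (T k \<alpha> i) p)" for k
      by (rule Dt_sum) (simp_all add: T)
    ultimately show ?thesis
      by (simp add: Dt_sum)
  qed
  then have "(\<Sum>i<n. Dt i (Psi n m M N P Q F i) p) = (\<Sum>k\<in>{1..N}. \<Sum>\<alpha><m. \<Sum>i<n. \<Sum>JK\<in>index_splits n k.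
      (-1) ^ length (snd JK) * Dt i (\<lambda>q. Dl (fst JK) (P \<alpha>) q * Dl (snd JK) (?B \<alpha> (fst JK @ snd JK @ [i])) q) p)"
    by (simp add: Dt_T sum.swap[of _ "{..<n}"])
  also have "\<dots> = (\<Sum>k\<in>{1..N}. \<Sum>\<alpha><m. (\<Sum>I\<in>mis n k. Dl I (P \<alpha>) p * ?B \<alpha> I p)
        - (-1) ^ k * (\<Sum>I\<in>mis n k. P \<alpha> p * Dl I (?B \<alpha> I) p))"
    using P by (intro sum.cong refl sum_Dt_splits B contracted_dU_mset_eq) auto
  finally show ?thesis .
qed

lemma frechet_adjoint_divergence:
  assumes QF: "\<And>a. a < M \<Longrightarrow> smooth_dfun (Q a) \<and> smooth_dfun (F a)"
    and P: "\<And>\<alpha>. \<alpha> < m \<Longrightarrow> smooth_dfun (P \<alpha>)"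
  shows "(\<Sum>a<M. Q a p * frechet n m N P F a p) - (\<Sum>\<alpha><m. P \<alpha> p * adjoint n M N Q F \<alpha> p)
       = (\<Sum>i<n. Dt i (Psi n m M N P Q F i) p)"
proof -
  have "{..N} = insert 0 {1..N}" by auto
  \<comment> \<open>the \<open>k = 0\<close> terms cancel, as \<open>mis n 0 = {[]}\<close>\<close>
  then have "(\<Sum>a<M. Q a p * frechet n m N P F a p) - (\<Sum>\<alpha><m. P \<alpha> p * adjoint n M N Q F \<alpha> p)
      = (\<Sum>k\<in>{1..N}. \<Sum>\<alpha><m. (\<Sum>I\<in>mis n k. Dl I (P \<alpha>) p * contracted_dU M Q F \<alpha> I p)
          - (-1) ^ k * (\<Sum>I\<in>mis n k. P \<alpha> p * Dl I (contracted_dU M Q F \<alpha> I) p))"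
    unfolding sum_mult_frechet sum_mult_adjoint by (simp add: sum_subtractf)
  also have "\<dots> = (\<Sum>i<n. Dt i (Psi n m M N P Q F i) p)"
    by (rule sum_Dt_Psi[OF QF P, symmetric])
  finally show ?thesis .
qed

theorem theorem2:
  fixes n m M N :: nat
    and F :: "nat \<Rightarrow> dfun" and P Q :: "nat \<Rightarrow> dfun"
  assumes F_smooth: "\<forall>a<M. smooth_dfun (F a)"
    and F_order: "\<forall>a<M. deps (F a) \<subseteq> {c. ucoord n m c \<and> jorder c \<le> N}"
    and P_smooth: "\<forall>\<alpha><m. smooth_dfun (P \<alpha>) \<and> deps (P \<alpha>) \<subseteq> {c. ucoord n m c}"
    and Q_smooth: "\<forall>a<M. smooth_dfun (Q a) \<and> deps (Q a) \<subseteq> {c. ucoord n m c}"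
    and adj_sym: "\<forall>\<alpha><m. onE n M F (adjoint n M N Q F \<alpha>)"
    and sym: "\<forall>a<M. onE n M F (frechet n m N P F a)"
  shows "(\<forall>i<n. subst_v Q (Phi n m M N P F i) = Psi n m M N P Q F i)
    \<and> (\<forall>p. (\<Sum>a<M. Q a p * frechet n m N P F a p) - (\<Sum>\<alpha><m. P \<alpha> p * adjoint n M N Q F \<alpha> p)
            = (\<Sum>i<n. Dt i (Psi n m M N P Q F i) p))
    \<and> onE n M F (\<lambda>p. \<Sum>i<n. Dt i (Psi n m M N P Q F i) p)"
proof -
  have v_free: "v_free f" if "deps f \<subseteq> {c. ucoord n m c}" for f
    using that unfolding v_free_def by fastforce
  have F: "smooth_dfun (F a) \<and> v_free (F a)" if "a < M" for a
    using that F_smooth F_order by (auto intro: v_free)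
  have P: "smooth_dfun (P \<alpha>) \<and> v_free (P \<alpha>)" if "\<alpha> < m" for \<alpha>
    using that P_smooth by (auto intro: v_free)
  have QF: "smooth_dfun (Q a) \<and> smooth_dfun (F a)" if "a < M" for a
    using that Q_smooth F_smooth by auto
  have divergence: "(\<Sum>a<M. Q a p * frechet n m N P F a p) - (\<Sum>\<alpha><m. P \<alpha> p * adjoint n M N Q F \<alpha> p)
      = (\<Sum>i<n. Dt i (Psi n m M N P Q F i) p)" for p
    by (rule frechet_adjoint_divergence) (simp_all add: QF P)
  moreover have "onE n M F (\<lambda>p. \<Sum>i<n. Dt i (Psi n m M N P Q F i) p)"
    using adj_sym sym unfolding onE_def divergence[symmetric] by simp
  moreover have "subst_v Q (Phi n m M N P F i) = Psi n m M N P Q F i" for i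
    by (rule subst_v_Phi) (simp_all add: F P QF)
  ultimately show ?thesis by blast
qed

end
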